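(* Let $\mathcal{A}$ be a class of square arrays as in the context, let $\frac12\le\alpha\le1$, and let $A\in\mathcal{M}^*_{\mathcal{A}}(\alpha)$ be an array of order $n$. If $A_{ij}$ is a singleton, then $|\Psi_{ij}(A)|>\alpha(2n-1)$, and $R_i(A)$ contains more than $(2\alpha-1)n$ symbols that appear only in row $i$ of $A$, and $C_j(A)$ contains more than $(2\alpha-1)n$ symbols that appear only in column $j$ of $A$.
   Context: An array of order $n$ is an $n\times n$ array with a symbol in each cell; an entry is a triple $(i,j,A_{ij})$. A transversal of an $m\times m$ array is a set of $m$ entries, no two agreeing in row, column, or symbol; an array is transversal-free if it has no transversal. A symbol is a singleton if it occurs exactly once in the array and a clone otherwise; $A_{ij}$ is called a singleton/clone according to the symbol in cell $(i,j)$. $R_i(A)$, $C_j(A)$ are the sets of symbols in row $i$ and column $j$; $A(i\mid j)$ is the array obtained by deleting row $i$ and column $j$; $\Psi_{ij}(A)$ is the set of symbols appearing in $A$ but not in $A(i\mid j)$. Let $\mathcal{A}$ be a class of square arrays such that (i) deleting any one row and any one column from an array in $\mathcal{A}$ gives an array in $\mathcal{A}$, and (ii) changing the symbol in one cell of an array in $\mathcal{A}$ to a new symbol appearing nowhere else in the array gives an array in $\mathcal{A}$. For $\frac12\le\alpha\le1$, $\mathcal{M}_{\mathcal{A}}(\alpha)$ is the set of transversal-free arrays in $\mathcal{A}$ whose number of distinct symbols is at least $\alpha$ times the number of cells. $\mathcal{M}^*_{\mathcal{A}}(\alpha)\subseteq\mathcal{M}_{\mathcal{A}}(\alpha)$ consists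 of those $A\in\mathcal{M}_{\mathcal{A}}(\alpha)$ such that no array in $\mathcal{M}_{\mathcal{A}}(\alpha)$ has smaller order than $A$, and no array in $\mathcal{M}_{\mathcal{A}}(\alpha)$ of the same order as $A$ has more distinct symbols than $A$. *)

theory Defs
  imports Main Complex_Main
begin

text \<open>An array of order n is a list of n rows, each a list of n symbols;
  the entry in cell (i,j) (0-based) is A ! i ! j.\<close>

type_synonym 's array = "'s list list"

definition ord_arr :: "'s array \<Rightarrow> nat" where
  "ord_arr A = length A"

definition square_array :: "'s array \<Rightarrow> bool" where
  "square_array A \<longleftrightarrow> (\<forall>r\<in>set A. length r = length A)"

definition entries :: "'s array \<Rightarrow> (nat \<times> nat \<times> 's) set" where
  "entries A = {(i, j, A ! i ! j) | i j. i < length A \<and> j < length A}"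

definition symbols :: "'s array \<Rightarrow> 's set" where
  "symbols A = {A ! i ! j | i j. i < length A \<and> j < length A}"

definition is_transversal :: "'s array \<Rightarrow> (nat \<times> nat \<times> 's) set \<Rightarrow> bool" where
  "is_transversal A T \<longleftrightarrow> T \<subseteq> entries A \<and> finite T \<and> card T = length A \<and>
     (\<forall>e\<in>T. \<forall>e'\<in>T. e \<noteq> e' \<longrightarrow>
        fst e \<noteq> fst e' \<and> fst (snd e) \<noteq> fst (snd e') \<and> snd (snd e) \<noteq> snd (snd e'))"

definition transversal_free :: "'s array \<Rightarrow> bool" where
  "transversal_free A \<longleftrightarrow> \<not> (\<exists>T. is_transversal A T)"

definition occurrences :: "'s array \<Rightarrow> 's \<Rightarrow> nat" where
  "occurrences A s = card {(i, j). i < length A \<and> j < length A \<and> A ! i ! j = s}"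

definition is_singleton :: "'s array \<Rightarrow> 's \<Rightarrow> bool" where
  "is_singleton A s \<longleftrightarrow> occurrences A s = 1"

definition del_rc :: "'s array \<Rightarrow> nat \<Rightarrow> nat \<Rightarrow> 's array" where
  "del_rc A i j = map (\<lambda>r. take j r @ drop (Suc j) r) (take i A @ drop (Suc i) A)"

definition set_cell :: "'s array \<Rightarrow> nat \<Rightarrow> nat \<Rightarrow> 's \<Rightarrow> 's array" where
  "set_cell A i j s = A[i := (A ! i)[j := s]]"

definition Psi :: "'s array \<Rightarrow> nat \<Rightarrow> nat \<Rightarrow> 's set" where
  "Psi A i j = symbols A - symbols (del_rc A i j)"

definition row_syms :: "'s array \<Rightarrow> nat \<Rightarrow> 's set" where
  "row_syms A i = {A ! i ! j | j. j < length A}"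

definition col_syms :: "'s array \<Rightarrow> nat \<Rightarrow> 's set" where
  "col_syms A j = {A ! i ! j | i. i < length A}"

definition row_only_syms :: "'s array \<Rightarrow> nat \<Rightarrow> 's set" where
  "row_only_syms A i = {s \<in> row_syms A i. \<forall>i' j'. i' < length A \<and> j' < length A \<and> A ! i' ! j' = s \<longrightarrow> i' = i}"

definition col_only_syms :: "'s array \<Rightarrow> nat \<Rightarrow> 's set" where
  "col_only_syms A j = {s \<in> col_syms A j. \<forall>i' j'. i' < length A \<and> j' < length A \<and> A ! i' ! j' = s \<longrightarrow> j' = j}"

definition admissible_class :: "'s array set \<Rightarrow> bool" where
  "admissible_class \<A> \<longleftrightarrow>
     (\<forall>A\<in>\<A>. square_array A) \<and>
     (\<forall>A\<in>\<A>. \<forall>i j. i < length A \<and> j < length A \<longrightarrow> del_rc A i j \<in> \<A>) \<and>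
     (\<forall>A\<in>\<A>. \<forall>i j s. i < length A \<and> j < length A \<and> s \<notin> symbols A \<longrightarrow> set_cell A i j s \<in> \<A>)"

definition M_class :: "'s array set \<Rightarrow> real \<Rightarrow> 's array set" where
  "M_class \<A> \<alpha> = {A \<in> \<A>. transversal_free A \<and>
      real (card (symbols A)) \<ge> \<alpha> * real (length A ^ 2)}"

definition M_star :: "'s array set \<Rightarrow> real \<Rightarrow> 's array set" where
  "M_star \<A> \<alpha> = {A \<in> M_class \<A> \<alpha>.
      (\<forall>B\<in>M_class \<A> \<alpha>. length A \<le> length B) \<and>
      (\<forall>B\<in>M_class \<A> \<alpha>. length B = length A \<longrightarrow> card (symbols B) \<le> card (symbols A))}"

end

theory Submission
  imports Defs
begin

text \<open>Deleting row i and column j through a singleton A_ij preserves transversal-freeness,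
  since any transversal of A(i|j) extends by the entry (i,j,A_ij) to one of A. By minimality
  of the order, A(i|j) therefore has fewer than \<alpha>(n-1)^2 symbols, while A has at least
  \<alpha> n^2; the difference \<Psi>_ij(A) thus exceeds \<alpha>(2n-1). A symbol lost by the deletion occurs
  only in row i or only in column j; those of the second kind outside row i number at most
  n-1, so more than \<alpha>(2n-1) - (n-1) \<ge> (2\<alpha>-1)n symbols occur only in row i, and symmetrically
  for column j.\<close>

definition skip :: "nat \<Rightarrow> nat \<Rightarrow> nat" where
  "skip i a = (if a < i then a else Suc a)"

lemma skip_neq: "skip i a \<noteq> i" "i \<noteq> skip i a"
  by (simp_all add: skip_def)

lemma inj_skip: "inj (skip i)"
  by (auto simp: inj_def skip_def split: if_splits)

lemma bij_betw_skip:
  assumes "i < n"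
  shows "bij_betw (skip i) {..<n - 1} ({..<n} - {i})"
  unfolding bij_betw_def
proof
  show "inj_on (skip i) {..<n - 1}" using inj_skip by (rule inj_on_subset) simp
  show "skip i ` {..<n - 1} = {..<n} - {i}"
  proof (intro equalityI subsetI)
    fix k assume k: "k \<in> {..<n} - {i}"
    have "k = skip i (if k < i then k else k - 1)" using k by (auto simp: skip_def)
    moreover have "(if k < i then k else k - 1) \<in> {..<n - 1}" using k assms by auto
    ultimately show "k \<in> skip i ` {..<n - 1}" by blast
  qed (use assms in \<open>auto simp: skip_def\<close>)
qed

lemma symbols_eq_image: "symbols A = (\<lambda>(a, b). A ! a ! b) ` ({..<length A} \<times> {..<length A})"
  unfolding symbols_def by auto

lemma finite_symbols: "finite (symbols A)"
  unfolding symbols_eq_image by simp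

lemma length_del_rc: "i < length A \<Longrightarrow> length (del_rc A i j) = length A - 1"
  by (simp add: del_rc_def)

lemma del_rc_nth:
  assumes sq: "square_array A" and i: "i < length A" and j: "j < length A"
    and a: "a < length A - 1" and b: "b < length A - 1"
  shows "del_rc A i j ! a ! b = A ! skip i a ! skip j b"
proof -
  have row: "(take i A @ drop (Suc i) A) ! a = A ! skip i a"
    using i a by (auto simp: skip_def nth_append)
  have "skip i a < length A" using bij_betw_skip[OF i] a by (auto dest: bij_betw_apply)
  then have "length (A ! skip i a) = length A"
    using sq unfolding square_array_def by auto
  moreover have "del_rc A i j ! a = take j (A ! skip i a) @ drop (Suc j) (A ! skip i a)"
    unfolding del_rc_def using i a row by (simp del: map_append)
  ultimately show ?thesis using j b by (auto simp: skip_def nth_append)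
qed

lemma symbols_del_rc:
  assumes sq: "square_array A" and i: "i < length A" and j: "j < length A"
  shows "symbols (del_rc A i j)
    = (\<lambda>(a, b). A ! a ! b) ` (({..<length A} - {i}) \<times> ({..<length A} - {j}))"
proof -
  let ?m = "{..<length A - 1}"
  have "symbols (del_rc A i j) = (\<lambda>(a, b). del_rc A i j ! a ! b) ` (?m \<times> ?m)"
    using symbols_eq_image length_del_rc[OF i] by metis
  also have "\<dots> = (\<lambda>(a, b). A ! a ! b) ` map_prod (skip i) (skip j) ` (?m \<times> ?m)"
    by (force simp: image_image del_rc_nth[OF sq i j])
  also have "map_prod (skip i) (skip j) ` (?m \<times> ?m) = ({..<length A} - {i}) \<times> ({..<length A} - {j})"
    using bij_betw_skip[OF i] bij_betw_skip[OF j] by (intro map_prod_surj_on) (auto simp: bij_betw_def)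
  finally show ?thesis .
qed

lemma symbols_del_rc_subset:
  assumes "square_array A" "i < length A" "j < length A"
  shows "symbols (del_rc A i j) \<subseteq> symbols A"
  unfolding symbols_del_rc[OF assms] by (auto simp: symbols_def)

lemma is_singleton_cell_unique:
  assumes "is_singleton A (A ! i ! j)" "i < length A" "j < length A"
    "i' < length A" "j' < length A" "A ! i' ! j' = A ! i ! j"
  shows "i' = i \<and> j' = j"
proof -
  let ?S = "{(a, b). a < length A \<and> b < length A \<and> A ! a ! b = A ! i ! j}"
  have "card ?S = 1" using assms(1) unfolding is_singleton_def occurrences_def by simp
  then obtain x where "?S = {x}" by (auto simp: card_Suc_eq)
  moreover have "(i, j) \<in> ?S" "(i', j') \<in> ?S" using assms by auto
  ultimately show ?thesis by auto
qed

definition independent_entries :: "nat \<times> nat \<times> 's \<Rightarrow> nat \<times> nat \<times> 's \<Rightarrow> bool" where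
  "independent_entries e e' \<longleftrightarrow>
     fst e \<noteq> fst e' \<and> fst (snd e) \<noteq> fst (snd e') \<and> snd (snd e) \<noteq> snd (snd e')"

lemma is_transversal_iff_pairwise:
  "is_transversal A T \<longleftrightarrow>
     T \<subseteq> entries A \<and> finite T \<and> card T = length A \<and> pairwise independent_entries T"
  unfolding is_transversal_def pairwise_def independent_entries_def ..

lemma is_transversal_extend_del_rc:
  fixes A :: "'s array"
  assumes sq: "square_array A" and i: "i < length A" and j: "j < length A"
    and sing: "is_singleton A (A ! i ! j)"
    and T: "is_transversal (del_rc A i j) T"
  shows "is_transversal A (insert (i, j, A ! i ! j) (map_prod (skip i) (map_prod (skip j) id) ` T))"
proof -
  let ?f = "map_prod (skip i) (map_prod (skip j) (id :: 's \<Rightarrow> 's))"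
  have sub: "T \<subseteq> entries (del_rc A i j)" and fin: "finite T" and card: "card T = length A - 1"
    and indep: "pairwise independent_entries T"
    using T length_del_rc[OF i] unfolding is_transversal_iff_pairwise by auto
  have inj_f: "inj ?f" using inj_skip by (auto simp: inj_def)
  have lifted: "skip i a < length A \<and> skip j b < length A \<and> s = A ! skip i a ! skip j b"
    if "(a, b, s) \<in> T" for a b s
  proof -
    have "a < length A - 1" "b < length A - 1" "s = del_rc A i j ! a ! b"
      using that sub unfolding entries_def length_del_rc[OF i] by auto
    then show ?thesis
      using del_rc_nth[OF sq i j] bij_betw_skip[OF i] bij_betw_skip[OF j]
      by (auto dest: bij_betw_apply)
  qed
  have new_indep: "independent_entries (i, j, A ! i ! j) (?f (a, b, s))" if "(a, b, s) \<in> T" for a b s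
  proof -
    have "s \<noteq> A ! i ! j"
      using lifted[OF that] is_singleton_cell_unique[OF sing i j] skip_neq by metis
    then show ?thesis using skip_neq by (simp add: independent_entries_def)
  qed
  have "?f ` T \<subseteq> entries A" using lifted by (fastforce simp: entries_def)
  moreover have "(i, j, A ! i ! j) \<in> entries A" using i j by (auto simp: entries_def)
  moreover have "card (insert (i, j, A ! i ! j) (?f ` T)) = length A"
  proof -
    have "(i, j, A ! i ! j) \<notin> ?f ` T" using skip_neq by auto
    moreover have "card (?f ` T) = card T" using inj_f by (simp add: card_image inj_on_subset)
    ultimately show ?thesis using fin card i by simp
  qed
  moreover have "pairwise independent_entries (insert (i, j, A ! i ! j) (?f ` T))"
  proof -
    have "pairwise independent_entries (?f ` T)"
      using indep inj_skip unfolding pairwise_image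
      by (auto simp: pairwise_def independent_entries_def inj_eq)
    moreover have "independent_entries e (i, j, A ! i ! j)"
      if "independent_entries (i, j, A ! i ! j) e" for e :: "nat \<times> nat \<times> 's"
      using that by (auto simp: independent_entries_def)
    ultimately show ?thesis using new_indep by (auto simp: pairwise_insert)
  qed
  ultimately show ?thesis using fin by (simp add: is_transversal_iff_pairwise)
qed

lemma transversal_free_del_rc:
  assumes "square_array A" "i < length A" "j < length A"
    and "is_singleton A (A ! i ! j)" and "transversal_free A"
  shows "transversal_free (del_rc A i j)"
  using assms is_transversal_extend_del_rc unfolding transversal_free_def by blast

lemma M_star_square_array: "admissible_class \<A> \<Longrightarrow> A \<in> M_star \<A> \<alpha> \<Longrightarrow> square_array A"
  unfolding admissible_class_def M_star_def M_class_def by auto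

lemma M_star_del_rc_few_symbols:
  assumes \<A>: "admissible_class \<A>" and A: "A \<in> M_star \<A> \<alpha>"
    and i: "i < length A" and j: "j < length A" and sing: "is_singleton A (A ! i ! j)"
  shows "real (card (symbols (del_rc A i j))) < \<alpha> * real ((length A - 1) ^ 2)"
proof (rule ccontr)
  assume many: "\<not> ?thesis"
  have "A \<in> \<A>" and tf: "transversal_free A" and minimal: "\<forall>B\<in>M_class \<A> \<alpha>. length A \<le> length B"
    using A unfolding M_star_def M_class_def by auto
  have "transversal_free (del_rc A i j)"
    using transversal_free_del_rc M_star_square_array[OF \<A> A] i j sing tf by blast
  moreover have "del_rc A i j \<in> \<A>" using \<A> \<open>A \<in> \<A>\<close> i j unfolding admissible_class_def by auto
  ultimately have "del_rc A i j \<in> M_class \<A> \<alpha>"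
    using many length_del_rc[OF i] unfolding M_class_def by auto
  then show False using minimal i length_del_rc[OF i] by fastforce
qed

lemma card_Psi:
  assumes "square_array A" "i < length A" "j < length A"
  shows "real (card (Psi A i j)) = real (card (symbols A)) - real (card (symbols (del_rc A i j)))"
proof -
  have sub: "symbols (del_rc A i j) \<subseteq> symbols A" using symbols_del_rc_subset[OF assms] .
  then have "card (symbols (del_rc A i j)) \<le> card (symbols A)" by (simp add: card_mono finite_symbols)
  then show ?thesis
    unfolding Psi_def card_Diff_subset[OF finite_subset[OF sub finite_symbols] sub] by simp
qed

lemma M_star_card_Psi_gt:
  assumes \<A>: "admissible_class \<A>" and A: "A \<in> M_star \<A> \<alpha>"
    and i: "i < length A" and j: "j < length A" and sing: "is_singleton A (A ! i ! j)"
  shows "real (card (Psi A i j)) > \<alpha> * (2 * real (length A) - 1)"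
proof -
  let ?n = "length A"
  have many: "real (card (symbols A)) \<ge> \<alpha> * real (?n ^ 2)"
    using A unfolding M_star_def M_class_def by auto
  have "real (?n - 1) = real ?n - 1" using i by simp
  then have "\<alpha> * real (?n ^ 2) - \<alpha> * real ((?n - 1) ^ 2) = \<alpha> * (2 * real ?n - 1)"
    unfolding of_nat_power by (simp add: algebra_simps power2_eq_square)
  then show ?thesis
    using many M_star_del_rc_few_symbols[OF \<A> A i j sing] card_Psi[OF M_star_square_array[OF \<A> A] i j]
    by linarith
qed

lemma Psi_subset_row_only:
  assumes "square_array A" "i < length A" "j < length A"
  shows "Psi A i j \<subseteq> row_only_syms A i \<union> (\<lambda>i'. A ! i' ! j) ` ({..<length A} - {i})"
proof
  fix s assume s: "s \<in> Psi A i j"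
  show "s \<in> row_only_syms A i \<union> (\<lambda>i'. A ! i' ! j) ` ({..<length A} - {i})"
  proof (cases "s \<in> row_only_syms A i")
    case False
    obtain a b where "a < length A" "b < length A" "s = A ! a ! b"
      using s unfolding Psi_def symbols_def by auto
    with False obtain i' j' where o: "i' < length A" "j' < length A" "s = A ! i' ! j'" "i' \<noteq> i"
      unfolding row_only_syms_def row_syms_def by blast
    then have "j' = j" using s unfolding Psi_def symbols_del_rc[OF assms] by force
    then show ?thesis using o by auto
  qed simp
qed

lemma Psi_subset_col_only:
  assumes "square_array A" "i < length A" "j < length A"
  shows "Psi A i j \<subseteq> col_only_syms A j \<union> (\<lambda>j'. A ! i ! j') ` ({..<length A} - {j})"
proof
  fix s assume s: "s \<in> Psi A i j"
  show "s \<in> col_only_syms A j \<union> (\<lambda>j'. A ! i ! j') ` ({..<length A} - {j})"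
  proof (cases "s \<in> col_only_syms A j")
    case False
    obtain a b where "a < length A" "b < length A" "s = A ! a ! b"
      using s unfolding Psi_def symbols_def by auto
    with False obtain i' j' where o: "i' < length A" "j' < length A" "s = A ! i' ! j'" "j' \<noteq> j"
      unfolding col_only_syms_def col_syms_def by blast
    then have "i' = i" using s unfolding Psi_def symbols_del_rc[OF assms] by force
    then show ?thesis using o by auto
  qed simp
qed

lemma card_le_card_Un_image:
  assumes "P \<subseteq> R \<union> g ` K" "finite R" "finite K"
  shows "card P \<le> card R + card K"
proof -
  have "card P \<le> card (R \<union> g ` K)" using assms by (intro card_mono) auto
  also have "\<dots> \<le> card R + card (g ` K)" by (rule card_Un_le)
  also have "card (g ` K) \<le> card K" using assms(3) by (rule card_image_le)
  finally show ?thesis by simp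
qed

lemma finite_row_only_syms: "i < length A \<Longrightarrow> finite (row_only_syms A i)"
  by (rule finite_subset[OF _ finite_symbols])
     (fastforce simp: row_only_syms_def row_syms_def symbols_def)

lemma finite_col_only_syms: "j < length A \<Longrightarrow> finite (col_only_syms A j)"
  by (rule finite_subset[OF _ finite_symbols])
     (fastforce simp: col_only_syms_def col_syms_def symbols_def)

lemma card_Psi_le_row_only:
  assumes "square_array A" "i < length A" "j < length A"
  shows "card (Psi A i j) \<le> card (row_only_syms A i) + (length A - 1)"
  using card_le_card_Un_image[OF Psi_subset_row_only[OF assms] finite_row_only_syms] assms(2)
  by simp

lemma card_Psi_le_col_only:
  assumes "square_array A" "i < length A" "j < length A"
  shows "card (Psi A i j) \<le> card (col_only_syms A j) + (length A - 1)"
  using card_le_card_Un_image[OF Psi_subset_col_only[OF assms] finite_col_only_syms] assms(3)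
  by simp

theorem mainTheorem5:
  fixes \<A> :: "'s array set" and \<alpha> :: real and A :: "'s array" and n i j :: nat
  assumes "infinite (UNIV :: 's set)"
    and "admissible_class \<A>"
    and "1/2 \<le> \<alpha>" and "\<alpha> \<le> 1"
    and "A \<in> M_star \<A> \<alpha>"
    and "ord_arr A = n"
    and "i < n" and "j < n"
    and "is_singleton A (A ! i ! j)"
  shows "real (card (Psi A i j)) > \<alpha> * (2 * real n - 1)
    \<and> real (card (row_only_syms A i)) > (2 * \<alpha> - 1) * real n
    \<and> real (card (col_only_syms A j)) > (2 * \<alpha> - 1) * real n"
proof -
  have n: "length A = n" using assms(6) unfolding ord_arr_def by simp
  with assms have i: "i < length A" and j: "j < length A" by auto
  note sq = M_star_square_array[OF assms(2,5)]
  have "real (card (Psi A i j)) > \<alpha> * (2 * real n - 1)"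
    using M_star_card_Psi_gt[OF assms(2,5) i j assms(9)] n by simp
  moreover have "real (card (Psi A i j)) \<le> real (card (row_only_syms A i)) + real n - 1"
    using card_Psi_le_row_only[OF sq i j] n i by linarith
  moreover have "real (card (Psi A i j)) \<le> real (card (col_only_syms A j)) + real n - 1"
    using card_Psi_le_col_only[OF sq i j] n i by linarith
  moreover have "\<alpha> * (2 * real n - 1) - (real n - 1) \<ge> (2 * \<alpha> - 1) * real n"
    using assms(4) by (simp add: algebra_simps)
  ultimately show ?thesis by linarith
qed

end
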